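(* Let $\beta^*\approx1.5437$ be the real root of $x^3-2x^2+2x=2$. If $\beta\in(3/2,\beta^*]$, then $S_\beta$ has non-empty interior, and each hole of $S_\beta$ has the form $f_{\vec q_i}^n(H)$ for some $i\in\{0,1,2\}$ and some integer $n\ge0$.
   Context: $\vec q_0=(0,0)$, $\vec q_1=(1,0)$, $\vec q_2=(0,1)$, $f_{\vec q_i}(\vec z)=(\vec z+\vec q_i)/\beta$, and $S_\beta$ is the attractor of this IFS (the unique nonempty compact set with $S_\beta=\bigcup_i f_{\vec q_i}(S_\beta)$). $\Delta$ is the convex hull of $S_\beta$, the closed triangle with vertices $(0,0)$, $(\frac1{\beta-1},0)$, $(0,\frac1{\beta-1})$. $H=\Delta\setminus\bigcup_{i=0}^2 f_{\vec q_i}(\Delta)$ is the central hole, which equals $\{(x,y):x<\frac1\beta,\ y<\frac1\beta,\ x+y>\frac{1}{\beta(\beta-1)}\}$. A hole of $S_\beta$ means a connected component of $\Delta\setminus S_\beta$. *)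

theory Defs
  imports "HOL-Analysis.Analysis"
begin

definition qv :: "nat \<Rightarrow> real \<times> real" where
  "qv i = (if i = 1 then (1, 0) else if i = 2 then (0, 1) else (0, 0))"

definition fq :: "real \<Rightarrow> nat \<Rightarrow> real \<times> real \<Rightarrow> real \<times> real" where
  "fq \<beta> i z = (1 / \<beta>) *\<^sub>R (z + qv i)"

definition S_beta :: "real \<Rightarrow> (real \<times> real) set" where
  "S_beta \<beta> = (THE S. S \<noteq> {} \<and> compact S \<and> S = (\<Union>i\<in>{0,1,2}. fq \<beta> i ` S))"

definition Delta :: "real \<Rightarrow> (real \<times> real) set" where
  "Delta \<beta> = convex hull (S_beta \<beta>)"

definition Hc :: "real \<Rightarrow> (real \<times> real) set" where
  "Hc \<beta> = Delta \<beta> - (\<Union>i\<in>{0,1,2}. fq \<beta> i ` Delta \<beta>)"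

definition is_hole :: "real \<Rightarrow> (real \<times> real) set \<Rightarrow> bool" where
  "is_hole \<beta> C \<longleftrightarrow> (\<exists>x \<in> Delta \<beta> - S_beta \<beta>.
      C = connected_component_set (Delta \<beta> - S_beta \<beta>) x)"

end

theory Submission
  imports Defs
begin

text \<open>
  Measure points of Delta by barycentric coordinates z_0, z_1, z_2, scaled to sum to
  c = 1/(beta - 1), with z_i maximal at the fixed point of f_{q_i}. The inverse of f_{q_i}
  multiplies every coordinate by beta and then subtracts 1 from z_i, and f_{q_i}^n(H) is
  the open triangle where z_i < c (1 - beta^-(n+1)) and the other two coordinates are
  below beta^-(n+1). Let K be Delta minus all these triangles. For 3/2 < beta <= beta* the
  triangles are pairwise disjoint, and K is the union of the three sets f_{q_i}(K): if a
  point z of K had no preimage in K, following the inverse maps twice would place z both in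
  f_{q_i}(f_{q_j}^m(H)) and in f_{q_j}(f_{q_i}^m'(H)) for some i ~= j and m, m' >= 1, and
  these two triangles are disjoint by polynomial inequalities in beta, the critical one
  being 2/beta^2 <= c - 1, i.e. beta <= beta*. Being compact and nonempty, K is the
  attractor. It visibly has interior points, and the holes of S_beta are the connected
  components of the union of the open triangles, i.e. the triangles themselves.
\<close>

lemma contraction_invariant_subset:
  fixes f :: "'i \<Rightarrow> 'a::metric_space \<Rightarrow> 'a"
  assumes k: "0 \<le> k" "k < 1"
    and lipschitz: "\<And>i x y. i \<in> I \<Longrightarrow> dist (f i x) (f i y) \<le> k * dist x y"
    and bounded: "bounded (A \<union> B)" and "closed B" "B \<noteq> {}"
    and A_sub: "A \<subseteq> (\<Union>i\<in>I. f i ` A)" and B_sub: "(\<Union>i\<in>I. f i ` B) \<subseteq> B"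
  shows "A \<subseteq> B"
proof
  define D where "D = diameter (A \<union> B)"
  have D: "dist x y \<le> D" if "x \<in> A" "y \<in> B" for x y
    unfolding D_def using bounded that diameter_bounded_bound by blast
  have approx: "\<forall>x\<in>A. \<exists>y\<in>B. dist x y \<le> D * k ^ n" for n
  proof (induction n)
    case 0
    then show ?case using D \<open>B \<noteq> {}\<close> by auto
  next
    case (Suc n)
    show ?case
    proof
      fix x assume "x \<in> A"
      then obtain i x' where i: "i \<in> I" and x': "x' \<in> A" and x: "x = f i x'"
        using A_sub by blast
      obtain y' where y': "y' \<in> B" and dist_y': "dist x' y' \<le> D * k ^ n"
        using Suc x' by blast
      have "dist x (f i y') \<le> k * dist x' y'" using lipschitz[OF i] x by simp
      also have "\<dots> \<le> D * k ^ Suc n" using mult_left_mono[OF dist_y' k(1)] by (simp add: algebra_simps)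
      finally show "\<exists>y\<in>B. dist x y \<le> D * k ^ Suc n" using B_sub i y' by blast
    qed
  qed
  have "(\<lambda>n. D * k ^ n) \<longlonglongrightarrow> 0"
    using k by (intro tendsto_mult_right_zero LIMSEQ_power_zero) auto
  fix x assume "x \<in> A"
  have "x \<in> closure B"
    unfolding closure_approachable
  proof (intro allI impI)
    fix e :: real assume "0 < e"
    then have "\<forall>\<^sub>F n in sequentially. D * k ^ n < e"
      using order_tendstoD(2)[OF \<open>(\<lambda>n. D * k ^ n) \<longlonglongrightarrow> 0\<close>] by blast
    then obtain n where "D * k ^ n < e" using eventually_sequentially by auto
    then show "\<exists>y\<in>B. dist y x < e"
      using approx \<open>x \<in> A\<close> by (metis dist_commute order.strict_trans1)
  qed
  then show "x \<in> B" using \<open>closed B\<close> by simp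
qed

lemma dist_fq: "0 < \<beta> \<Longrightarrow> dist (fq \<beta> i a) (fq \<beta> i b) = dist a b / \<beta>"
  by (simp add: fq_def dist_norm scaleR_diff_right[symmetric] divide_inverse_commute)

lemma S_beta_eqI:
  assumes "1 < \<beta>" "K \<noteq> {}" "compact K" "K = (\<Union>i\<in>{0,1,2}. fq \<beta> i ` K)"
  shows "S_beta \<beta> = K"
  unfolding S_beta_def
proof (rule the_equality)
  show "K \<noteq> {} \<and> compact K \<and> K = (\<Union>i\<in>{0,1,2}. fq \<beta> i ` K)" using assms(2-4) by blast
next
  fix S assume "S \<noteq> {} \<and> compact S \<and> S = (\<Union>i\<in>{0,1,2}. fq \<beta> i ` S)"
  then have S: "S \<noteq> {}" "compact S" and S_eq: "S = (\<Union>i\<in>{0,1,2}. fq \<beta> i ` S)"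
    by blast+
  have k: "0 \<le> 1 / \<beta>" "1 / \<beta> < 1" using assms(1) by auto
  have lipschitz: "dist (fq \<beta> i x) (fq \<beta> i y) \<le> 1 / \<beta> * dist x y" for i x y
    using dist_fq[of \<beta>] assms(1) by simp
  have bounded: "bounded (S \<union> K)" "bounded (K \<union> S)"
    using S assms(3) by (simp_all add: compact_imp_bounded)
  have "S \<subseteq> K"
    by (rule contraction_invariant_subset[where f = "fq \<beta>" and I = "{0,1,2}" and k = "1 / \<beta>"])
      (use k lipschitz bounded assms(2,3) equalityD1[OF S_eq] equalityD2[OF assms(4)]
        in \<open>simp_all add: compact_imp_closed\<close>)
  moreover have "K \<subseteq> S"
    by (rule contraction_invariant_subset[where f = "fq \<beta>" and I = "{0,1,2}" and k = "1 / \<beta>"])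
      (use k lipschitz bounded S equalityD1[OF assms(4)] equalityD2[OF S_eq]
        in \<open>simp_all add: compact_imp_closed\<close>)
  ultimately show "S = K" by blast
qed

lemma connected_component_disjoint_open_Union:
  assumes "\<And>V. V \<in> F \<Longrightarrow> open V" "\<And>V. V \<in> F \<Longrightarrow> connected V"
    and "pairwise disjnt F" and "V \<in> F" and "x \<in> V"
  shows "connected_component_set (\<Union>F) x = V"
proof (rule connected_component_unique)
  fix C assume C: "x \<in> C" "C \<subseteq> \<Union>F" "connected C"
  have "open (\<Union>(F - {V}))" using assms(1) by blast
  moreover have "V \<inter> \<Union>(F - {V}) \<inter> C = {}"
    using \<open>pairwise disjnt F\<close> \<open>V \<in> F\<close> by (auto simp: pairwise_def disjnt_def)
  moreover have "C \<subseteq> V \<union> \<Union>(F - {V})" using C(2) by blast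
  ultimately have "\<Union>(F - {V}) \<inter> C = {}"
    using connectedD[OF C(3) assms(1)[OF \<open>V \<in> F\<close>]] C(1) \<open>x \<in> V\<close> by blast
  then show "C \<subseteq> V" using \<open>C \<subseteq> V \<union> \<Union>(F - {V})\<close> by blast
qed (use assms in auto)

lemma cubic_mono:
  fixes x y :: real
  assumes "x \<le> y"
  shows "x ^ 3 - 2 * x ^ 2 + 2 * x \<le> y ^ 3 - 2 * y ^ 2 + 2 * y"
proof -
  have "12 * ((y ^ 3 - 2 * y ^ 2 + 2 * y) - (x ^ 3 - 2 * x ^ 2 + 2 * x))
      = (y - x) * ((3 * x + 3 * y - 4) ^ 2 + 3 * (x - y) ^ 2 + 8)"
    by (simp add: algebra_simps power2_eq_square power3_eq_cube)
  also have "\<dots> \<ge> 0" using assms by (intro mult_nonneg_nonneg add_nonneg_nonneg) auto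
  finally show ?thesis by simp
qed

section \<open>Barycentric coordinates and holes\<close>

definition side_len :: "real \<Rightarrow> real" where
  "side_len \<beta> = 1 / (\<beta> - 1)"

text \<open>The coordinate bary \<beta> i equals side_len \<beta> at the vertex of Delta fixed by fq \<beta> i and
  vanishes on the opposite side.\<close>

definition bary :: "real \<Rightarrow> nat \<Rightarrow> real \<times> real \<Rightarrow> real" where
  "bary \<beta> i z = (if i = 1 then fst z else if i = 2 then snd z else side_len \<beta> - fst z - snd z)"

definition fq_inv :: "real \<Rightarrow> nat \<Rightarrow> real \<times> real \<Rightarrow> real \<times> real" where
  "fq_inv \<beta> i z = \<beta> *\<^sub>R z - qv i"

definition hole_rad :: "real \<Rightarrow> nat \<Rightarrow> real" where
  "hole_rad \<beta> n = 1 / \<beta> ^ Suc n"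

text \<open>hole \<beta> i n is the triangle (fq \<beta> i ^^ n) ` Hc \<beta> (lemmas hole_iterate and Hc_eq_hole).\<close>

definition hole :: "real \<Rightarrow> nat \<Rightarrow> nat \<Rightarrow> (real \<times> real) set" where
  "hole \<beta> i n = {z. \<forall>j\<in>{0,1,2}. bary \<beta> j z <
     (if j = i then side_len \<beta> * (1 - hole_rad \<beta> n) else hole_rad \<beta> n)}"

definition tri :: "real \<Rightarrow> (real \<times> real) set" where
  "tri \<beta> = {z. \<forall>i\<in>{0,1,2}. 0 \<le> bary \<beta> i z}"

definition hole_union :: "real \<Rightarrow> (real \<times> real) set" where
  "hole_union \<beta> = (\<Union>i\<in>{0,1,2}. \<Union>n. hole \<beta> i n)"

definition gasket :: "real \<Rightarrow> (real \<times> real) set" where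
  "gasket \<beta> = tri \<beta> - hole_union \<beta>"

lemma third_index:
  assumes "i \<in> {0,1,2::nat}" "j \<in> {0,1,2}" "i \<noteq> j"
  obtains k where "k \<in> {0,1,2}" "k \<noteq> i" "k \<noteq> j" "{0,1,2} = {i, j, k}"
  using assms that[of "3 - i - j"] by fastforce

lemma index_triple:
  assumes "i \<in> {0,1,2::nat}"
  obtains j k where "j \<in> {0,1,2}" "k \<in> {0,1,2}" "i \<noteq> j" "i \<noteq> k" "j \<noteq> k" "{0,1,2} = {i, j, k}"
proof -
  define j :: nat where "j = (if i = 0 then 1 else 0)"
  have "j \<in> {0,1,2}" "i \<noteq> j" by (auto simp: j_def)
  with assms show ?thesis using that third_index by metis
qed

context
  fixes \<beta> :: real
  assumes \<beta>_gt_1: "1 < \<beta>"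
begin

lemma side_len_pos: "0 < side_len \<beta>"
  using \<beta>_gt_1 by (simp add: side_len_def)

lemma side_len_mult: "\<beta> * side_len \<beta> = side_len \<beta> + 1"
  using \<beta>_gt_1 by (simp add: side_len_def field_simps)

lemma bary_sum:
  assumes "i \<in> {0,1,2}" "j \<in> {0,1,2}" "k \<in> {0,1,2}" "i \<noteq> j" "i \<noteq> k" "j \<noteq> k"
  shows "bary \<beta> i z + bary \<beta> j z + bary \<beta> k z = side_len \<beta>"
  using assms by (auto simp: bary_def)

lemma bary_fq_inv:
  assumes "i \<in> {0,1,2}" "j \<in> {0,1,2}"
  shows "bary \<beta> j (fq_inv \<beta> i z) = \<beta> * bary \<beta> j z - (if j = i then 1 else 0)"
  using assms side_len_mult by (auto simp: bary_def fq_inv_def qv_def algebra_simps)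

lemma fq_inv_fq: "fq_inv \<beta> i (fq \<beta> i z) = z"
  using \<beta>_gt_1 by (simp add: fq_def fq_inv_def)

lemma fq_fq_inv: "fq \<beta> i (fq_inv \<beta> i z) = z"
  using \<beta>_gt_1 by (simp add: fq_def fq_inv_def)

lemma mem_fq_image_iff: "z \<in> fq \<beta> i ` X \<longleftrightarrow> fq_inv \<beta> i z \<in> X"
  by (metis fq_fq_inv fq_inv_fq image_iff)

lemma bary_fq:
  assumes "i \<in> {0,1,2}" "j \<in> {0,1,2}"
  shows "bary \<beta> j (fq \<beta> i w) = (bary \<beta> j w + (if j = i then 1 else 0)) / \<beta>"
  using bary_fq_inv[OF assms, of "fq \<beta> i w"] \<beta>_gt_1 by (simp add: fq_inv_fq field_simps)

lemma bary_convex_comb: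
  assumes "u + v = 1"
  shows "bary \<beta> j (u *\<^sub>R x + v *\<^sub>R y) = u * bary \<beta> j x + v * bary \<beta> j y"
proof -
  have "side_len \<beta> = u * side_len \<beta> + v * side_len \<beta>" using assms by (metis distrib_right mult_1)
  then show ?thesis by (auto simp: bary_def algebra_simps)
qed

lemma continuous_on_bary: "continuous_on S (bary \<beta> j)"
  unfolding bary_def by (cases "j = 1"; cases "j = 2") (simp_all add: continuous_intros)

lemma hole_rad_pos: "0 < hole_rad \<beta> n"
  using \<beta>_gt_1 by (simp add: hole_rad_def)

lemma hole_rad_Suc: "hole_rad \<beta> (Suc n) = hole_rad \<beta> n / \<beta>"
  by (simp add: hole_rad_def)

lemma hole_rad_0: "hole_rad \<beta> 0 = 1 / \<beta>"
  by (simp add: hole_rad_def)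

lemma hole_rad_antimono: "n \<le> m \<Longrightarrow> hole_rad \<beta> m \<le> hole_rad \<beta> n"
  using \<beta>_gt_1 by (simp add: hole_rad_def frac_le power_increasing)

lemma hole_rad_le: "hole_rad \<beta> n \<le> 1 / \<beta>"
  using hole_rad_antimono[of 0 n] by (simp add: hole_rad_0)

lemma side_len_complement: "side_len \<beta> * (1 - 1 / \<beta>) = 1 / \<beta>"
  using \<beta>_gt_1 by (simp add: side_len_def field_simps)

lemma mem_hole_iff:
  assumes "{0,1,2} = {i, j, k}" "i \<noteq> j" "i \<noteq> k" "j \<noteq> k"
  shows "z \<in> hole \<beta> i n \<longleftrightarrow> bary \<beta> i z < side_len \<beta> - side_len \<beta> * hole_rad \<beta> n
    \<and> bary \<beta> j z < hole_rad \<beta> n \<and> bary \<beta> k z < hole_rad \<beta> n"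
  using assms by (auto simp: hole_def right_diff_distrib)

lemma hole_0:
  assumes "i \<in> {0,1,2}"
  shows "hole \<beta> i 0 = {z. \<forall>j\<in>{0,1,2}. \<beta> * bary \<beta> j z < 1}"
proof -
  have "bary \<beta> j z < 1 / \<beta> \<longleftrightarrow> \<beta> * bary \<beta> j z < 1" for j z
    using \<beta>_gt_1 by (simp add: field_simps)
  then show ?thesis by (simp add: hole_def side_len_complement hole_rad_0)
qed

lemma hole_Suc:
  assumes i: "i \<in> {0,1,2}"
  shows "fq \<beta> i ` hole \<beta> i n = hole \<beta> i (Suc n)"
proof -
  have main: "\<beta> * b - 1 < side_len \<beta> * (1 - r) \<longleftrightarrow> b < side_len \<beta> * (1 - r / \<beta>)"
    and other: "\<beta> * b < r \<longleftrightarrow> b < r / \<beta>" for b r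
    using \<beta>_gt_1 side_len_mult by (simp_all add: field_simps)
  show ?thesis
    unfolding set_eq_iff mem_fq_image_iff hole_def mem_Collect_eq hole_rad_Suc
    by (intro allI ball_cong refl) (simp add: bary_fq_inv[OF i] main other)
qed

lemma hole_iterate:
  assumes "i \<in> {0,1,2}"
  shows "(fq \<beta> i ^^ n) ` hole \<beta> i 0 = hole \<beta> i n"
proof (induction n)
  case (Suc n)
  have "(fq \<beta> i ^^ Suc n) ` hole \<beta> i 0 = fq \<beta> i ` ((fq \<beta> i ^^ n) ` hole \<beta> i 0)"
    by (simp add: image_image)
  then show ?case using Suc hole_Suc[OF assms] by simp
qed simp

lemma bary_lt_in_hole:
  assumes "i \<in> {0,1,2}" "j \<in> {0,1,2}" "z \<in> hole \<beta> j n" "j \<noteq> i \<or> n = 0"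
  shows "\<beta> * bary \<beta> i z < 1"
  using assms(4)
proof
  assume "j \<noteq> i"
  then have "bary \<beta> i z < hole_rad \<beta> n" using assms(1,3) by (auto simp: hole_def)
  then have "\<beta> * bary \<beta> i z < \<beta> * hole_rad \<beta> n" using \<beta>_gt_1 by simp
  also have "\<dots> \<le> 1" using hole_rad_le[of n] \<beta>_gt_1 by (simp add: field_simps)
  finally show ?thesis .
next
  assume "n = 0"
  then show ?thesis using assms(1,3) hole_0[OF assms(2)] by auto
qed

lemma fq_inv_in_tri_iff:
  assumes "z \<in> tri \<beta>" "i \<in> {0,1,2}"
  shows "fq_inv \<beta> i z \<in> tri \<beta> \<longleftrightarrow> 1 \<le> \<beta> * bary \<beta> i z"
  using assms \<beta>_gt_1 by (auto simp: tri_def bary_fq_inv)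

lemma open_hole: "open (hole \<beta> i n)"
proof -
  have "hole \<beta> i n = (\<Inter>j\<in>{0,1,2}. {z. bary \<beta> j z <
      (if j = i then side_len \<beta> * (1 - hole_rad \<beta> n) else hole_rad \<beta> n)})"
    by (auto simp: hole_def)
  then show ?thesis
    by (simp only:) (intro open_INT finite.intros ballI open_Collect_less continuous_on_bary continuous_on_const)
qed

lemma convex_hole: "convex (hole \<beta> i n)"
  unfolding hole_def
  by (rule convexI) (auto simp: bary_convex_comb intro!: convex_bound_lt)

lemma convex_tri: "convex (tri \<beta>)"
  unfolding tri_def
  by (rule convexI) (auto simp: bary_convex_comb)

lemma closed_tri: "closed (tri \<beta>)"
proof -
  have "tri \<beta> = (\<Inter>j\<in>{0,1,2}. {z. 0 \<le> bary \<beta> j z})"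
    by (auto simp: tri_def)
  then show ?thesis
    by (simp only:) (intro closed_INT ballI closed_Collect_le continuous_on_bary continuous_on_const)
qed

lemma bounded_tri: "bounded (tri \<beta>)"
proof -
  have "tri \<beta> \<subseteq> cbox (0, 0) (side_len \<beta>, side_len \<beta>)"
  proof
    fix z assume "z \<in> tri \<beta>"
    then have "0 \<le> bary \<beta> i z" if "i \<in> {0,1,2}" for i
      using that by (auto simp: tri_def)
    from this[of 0] this[of 1] this[of 2] show "z \<in> cbox (0, 0) (side_len \<beta>, side_len \<beta>)"
      by (cases z) (auto simp: bary_def cbox_Pair_iff)
  qed
  then show ?thesis using bounded_cbox bounded_subset by blast
qed

lemma bary_vertex:
  assumes "i \<in> {0,1,2}" "j \<in> {0,1,2}"
  shows "bary \<beta> j (side_len \<beta> *\<^sub>R qv i) = (if j = i then side_len \<beta> else 0)"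
  using assms by (auto simp: bary_def qv_def)

lemma vertex_in_gasket:
  assumes i: "i \<in> {0,1,2}"
  shows "side_len \<beta> *\<^sub>R qv i \<in> gasket \<beta>"
proof -
  have "1 / \<beta> < side_len \<beta>"
    using \<beta>_gt_1 by (simp add: side_len_def frac_less2)
  then have "hole_rad \<beta> n < side_len \<beta>" for n
    using hole_rad_le[of n] by linarith
  moreover have "side_len \<beta> * (1 - hole_rad \<beta> n) < side_len \<beta>" for n
    using side_len_pos hole_rad_pos[of n] by simp
  ultimately have not_below: "\<not> side_len \<beta> < (if i = j then side_len \<beta> * (1 - hole_rad \<beta> n) else hole_rad \<beta> n)"
    for j n
    by (simp add: not_less less_imp_le)
  have "side_len \<beta> *\<^sub>R qv i \<notin> hole \<beta> j n" for j n
  proof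
    assume "side_len \<beta> *\<^sub>R qv i \<in> hole \<beta> j n"
    then have "bary \<beta> i (side_len \<beta> *\<^sub>R qv i) <
        (if i = j then side_len \<beta> * (1 - hole_rad \<beta> n) else hole_rad \<beta> n)"
      using i unfolding hole_def by blast
    then show False using not_below bary_vertex[OF i i] by simp
  qed
  then show ?thesis
    using i side_len_pos by (auto simp: gasket_def tri_def hole_union_def bary_vertex)
qed

lemma tri_subset_hull_vertices:
  "tri \<beta> \<subseteq> convex hull ((\<lambda>i. side_len \<beta> *\<^sub>R qv i) ` {0,1,2})"
proof
  fix z assume z: "z \<in> tri \<beta>"
  define c where "c = side_len \<beta>"
  have c: "0 < c" using side_len_pos by (simp add: c_def)
  have coords: "0 \<le> bary \<beta> i z / c" if "i \<in> {0,1,2}" for i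
    using z that c by (auto simp: tri_def)
  have "z = (bary \<beta> 0 z / c) *\<^sub>R (0, 0) + (bary \<beta> 1 z / c) *\<^sub>R (c, 0) + (bary \<beta> 2 z / c) *\<^sub>R (0, c)"
    using c by (cases z) (simp add: bary_def)
  moreover have "bary \<beta> 0 z / c + bary \<beta> 1 z / c + bary \<beta> 2 z / c = 1"
    using bary_sum[of 0 1 2 z] c by (simp add: c_def add_divide_distrib[symmetric])
  ultimately have "z \<in> convex hull {(0, 0), (c, 0), (0, c)}"
    unfolding convex_hull_3 using coords by blast
  then show "z \<in> convex hull ((\<lambda>i. side_len \<beta> *\<^sub>R qv i) ` {0,1,2})"
    by (simp add: c_def qv_def)
qed

lemma convex_hull_gasket: "convex hull (gasket \<beta>) = tri \<beta>"
proof
  show "convex hull (gasket \<beta>) \<subseteq> tri \<beta>"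
    by (rule hull_minimal) (auto simp: gasket_def convex_tri)
  have "(\<lambda>i. side_len \<beta> *\<^sub>R qv i) ` {0,1,2} \<subseteq> gasket \<beta>"
    using vertex_in_gasket by blast
  then show "tri \<beta> \<subseteq> convex hull (gasket \<beta>)"
    using tri_subset_hull_vertices hull_mono by blast
qed

section \<open>Disjointness of the holes for 3/2 < beta <= beta*\<close>

context
  assumes \<beta>_gt: "3/2 < \<beta>" and cubic: "\<beta> ^ 3 - 2 * \<beta> ^ 2 + 2 * \<beta> \<le> 2"
begin

lemma \<beta>_lt_2: "\<beta> < 2"
proof (rule ccontr)
  assume "\<not> \<beta> < 2"
  then have "2 ^ 3 - 2 * 2 ^ 2 + 2 * 2 \<le> \<beta> ^ 3 - 2 * \<beta> ^ 2 + 2 * (\<beta>::real)"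
    by (intro cubic_mono) simp
  then show False using cubic by simp
qed

text \<open>Apart from giving \<beta> < 2, the hypothesis \<beta> <= \<beta>* is used only here.\<close>

lemma two_hole_rad_1_le: "2 * hole_rad \<beta> 1 \<le> side_len \<beta> - 1"
proof -
  have "2 * (\<beta> - 1) \<le> (2 - \<beta>) * \<beta> ^ 2"
    using cubic by (simp add: algebra_simps power2_eq_square power3_eq_cube)
  then show ?thesis
    using \<beta>_gt by (simp add: hole_rad_def side_len_def field_simps power2_eq_square)
qed

lemma side_len_le_hole_rad_1: "side_len \<beta> - 1 \<le> (2 * side_len \<beta> - 1) * hole_rad \<beta> 1"
proof -
  have "4 * (3 - \<beta> - (2 - \<beta>) * \<beta> ^ 2) = (2 * \<beta> - 3) ^ 2 * (\<beta> + 1) + (3 - \<beta>)"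
    by (simp add: algebra_simps power2_eq_square power3_eq_cube)
  also have "\<dots> \<ge> 0" using \<beta>_gt \<beta>_lt_2 by simp
  finally have "2 - \<beta> \<le> (3 - \<beta>) / \<beta> ^ 2" using \<beta>_gt by (simp add: field_simps)
  then have "(2 - \<beta>) / (\<beta> - 1) \<le> (3 - \<beta>) / \<beta> ^ 2 / (\<beta> - 1)"
    using \<beta>_gt by (intro divide_right_mono) auto
  moreover have "(3 - \<beta>) / \<beta> ^ 2 / (\<beta> - 1) = (2 * side_len \<beta> - 1) * hole_rad \<beta> 1"
    using \<beta>_gt by (simp add: hole_rad_def side_len_def field_simps power2_eq_square)
  moreover have "side_len \<beta> - 1 = (2 - \<beta>) / (\<beta> - 1)"
    using \<beta>_gt by (simp add: side_len_def field_simps)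
  ultimately show ?thesis by simp
qed

lemma side_len_le_hole_rad_2: "side_len \<beta> - 1 \<le> 2 * side_len \<beta> * hole_rad \<beta> 2"
proof -
  have "16 * (2 - (2 - \<beta>) * \<beta> ^ 3) = (2 * \<beta> - 3) ^ 2 * (4 * \<beta> ^ 2 + 4 * \<beta> + 3) + 5"
    by (simp add: algebra_simps power2_eq_square power3_eq_cube)
  also have "\<dots> \<ge> 0" using \<beta>_gt by simp
  finally have "2 - \<beta> \<le> 2 / \<beta> ^ 3" using \<beta>_gt by (simp add: field_simps)
  then have "(2 - \<beta>) / (\<beta> - 1) \<le> 2 / \<beta> ^ 3 / (\<beta> - 1)"
    using \<beta>_gt by (intro divide_right_mono) auto
  moreover have "2 / \<beta> ^ 3 / (\<beta> - 1) = 2 * side_len \<beta> * hole_rad \<beta> 2"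
    using \<beta>_gt by (simp add: hole_rad_def side_len_def field_simps)
  moreover have "side_len \<beta> - 1 = (2 - \<beta>) / (\<beta> - 1)"
    using \<beta>_gt by (simp add: side_len_def field_simps)
  ultimately show ?thesis by simp
qed

lemma hole_rad_dichotomy_ordered:
  assumes "1 \<le> n" "n \<le> m"
  shows "side_len \<beta> - 1 \<le> side_len \<beta> * (hole_rad \<beta> n + hole_rad \<beta> m) - hole_rad \<beta> (max n m)
    \<or> hole_rad \<beta> n + hole_rad \<beta> m + hole_rad \<beta> (max n m) \<le> side_len \<beta> - 1"
proof -
  have r2: "hole_rad \<beta> 2 = hole_rad \<beta> 1 / \<beta>" and r3: "hole_rad \<beta> 3 = hole_rad \<beta> 1 / \<beta> ^ 2"
    using hole_rad_Suc by (simp_all add: numeral_eq_Suc power2_eq_square)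
  have r1_pos: "0 < hole_rad \<beta> 1" using hole_rad_pos .
  consider "n = 1" "m = 1" | "n = 1" "m = 2" | "n = 1" "3 \<le> m" | "2 \<le> n"
    using assms by linarith
  then show ?thesis
  proof cases
    case 1
    then show ?thesis using side_len_le_hole_rad_1 by (simp add: algebra_simps)
  next
    case 2
    have "side_len \<beta> * hole_rad \<beta> 1 = (\<beta> * side_len \<beta>) * hole_rad \<beta> 2"
      using r2 \<beta>_gt_1 by simp
    also have "\<dots> = (side_len \<beta> + 1) * hole_rad \<beta> 2"
      using side_len_mult by simp
    finally have "side_len \<beta> * hole_rad \<beta> 1 = (side_len \<beta> + 1) * hole_rad \<beta> 2" .
    then show ?thesis using 2 side_len_le_hole_rad_2 by (simp add: algebra_simps numeral_2_eq_2)
  next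
    case 3
    have "3/2 * (3/2) \<le> \<beta> * \<beta>" using \<beta>_gt by (intro mult_mono) auto
    then have "2 \<le> \<beta> ^ 2" by (simp add: power2_eq_square)
    moreover have "0 < \<beta> ^ 2" using \<beta>_gt_1 by simp
    ultimately have "2 * hole_rad \<beta> 3 \<le> hole_rad \<beta> 1"
      using r1_pos by (simp add: r3 field_simps)
    moreover have "hole_rad \<beta> m \<le> hole_rad \<beta> 3" using 3 by (intro hole_rad_antimono)
    ultimately show ?thesis using 3 two_hole_rad_1_le by (simp add: max_def)
  next
    case 4
    have "3 * hole_rad \<beta> 2 \<le> 2 * hole_rad \<beta> 1"
      using \<beta>_gt r1_pos by (simp add: r2 field_simps)
    moreover have "hole_rad \<beta> n \<le> hole_rad \<beta> 2" "hole_rad \<beta> m \<le> hole_rad \<beta> 2"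
      using 4 assms by (auto intro: hole_rad_antimono)
    ultimately show ?thesis using assms two_hole_rad_1_le by (simp add: max_def)
  qed
qed

lemma hole_rad_dichotomy:
  assumes "1 \<le> n" "1 \<le> m"
  shows "side_len \<beta> - 1 \<le> side_len \<beta> * (hole_rad \<beta> n + hole_rad \<beta> m) - hole_rad \<beta> (max n m)
    \<or> hole_rad \<beta> n + hole_rad \<beta> m + hole_rad \<beta> (max n m) \<le> side_len \<beta> - 1"
  using hole_rad_dichotomy_ordered[of n m] hole_rad_dichotomy_ordered[of m n] assms
  by (cases "n \<le> m") (simp_all add: max.commute add.commute)

lemma two_hole_rad_0_lt: "2 * hole_rad \<beta> 0 < side_len \<beta>"
  using \<beta>_lt_2 \<beta>_gt_1 by (simp add: hole_rad_0 side_len_def field_simps)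

lemma one_lt_side_len: "1 < side_len \<beta>"
  using two_hole_rad_1_le hole_rad_pos[of 1] by simp

lemma hole_subset_tri:
  assumes i: "i \<in> {0,1,2}"
  shows "hole \<beta> i n \<subseteq> tri \<beta>"
proof
  fix z assume z: "z \<in> hole \<beta> i n"
  obtain j k where jk: "j \<in> {0,1,2}" "k \<in> {0,1,2}" "i \<noteq> j" "i \<noteq> k" "j \<noteq> k" "{0,1,2} = {i, j, k}"
    using index_triple[OF i] .
  have bounds: "bary \<beta> i z < side_len \<beta> - side_len \<beta> * hole_rad \<beta> n"
      "bary \<beta> j z < hole_rad \<beta> n" "bary \<beta> k z < hole_rad \<beta> n"
    using z mem_hole_iff[OF jk(6,3-5)] by simp_all
  have sum: "bary \<beta> i z + bary \<beta> j z + bary \<beta> k z = side_len \<beta>"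
    using bary_sum[OF i jk(1-5)] .
  have "hole_rad \<beta> n \<le> side_len \<beta> * hole_rad \<beta> n"
    using one_lt_side_len hole_rad_pos[of n] by simp
  moreover have "2 * hole_rad \<beta> n < side_len \<beta>"
    using two_hole_rad_0_lt hole_rad_antimono[of 0 n] by simp
  ultimately show "z \<in> tri \<beta>"
    using bounds sum jk(6) unfolding tri_def by auto
qed

lemma hole_disjoint_same_index:
  assumes i: "i \<in> {0,1,2}" and "n < m"
  shows "hole \<beta> i n \<inter> hole \<beta> i m = {}"
proof (intro equals0I)
  fix z assume z: "z \<in> hole \<beta> i n \<inter> hole \<beta> i m"
  obtain j k where jk: "j \<in> {0,1,2}" "k \<in> {0,1,2}" "i \<noteq> j" "i \<noteq> k" "j \<noteq> k" "{0,1,2} = {i, j, k}"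
    using index_triple[OF i] .
  have bounds: "bary \<beta> i z < side_len \<beta> - side_len \<beta> * hole_rad \<beta> n"
      "bary \<beta> j z < hole_rad \<beta> m" "bary \<beta> k z < hole_rad \<beta> m"
    using z mem_hole_iff[OF jk(6,3-5)] by simp_all
  have sum: "bary \<beta> i z + bary \<beta> j z + bary \<beta> k z = side_len \<beta>"
    using bary_sum[OF i jk(1-5)] .
  have "hole_rad \<beta> m \<le> hole_rad \<beta> (Suc n)"
    using \<open>n < m\<close> by (intro hole_rad_antimono) simp
  also have "\<dots> = hole_rad \<beta> 0 * hole_rad \<beta> n"
    by (simp add: hole_rad_Suc hole_rad_0)
  finally have "2 * hole_rad \<beta> m \<le> (2 * hole_rad \<beta> 0) * hole_rad \<beta> n" by simp
  also have "\<dots> < side_len \<beta> * hole_rad \<beta> n"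
    using two_hole_rad_0_lt hole_rad_pos[of n] by (intro mult_strict_right_mono)
  finally show False using bounds sum by linarith
qed

lemma hole_disjoint_distinct_index:
  assumes ij: "i \<in> {0,1,2}" "j \<in> {0,1,2}" "i \<noteq> j" and "1 \<le> n"
  shows "hole \<beta> i n \<inter> hole \<beta> j m = {}"
proof (intro equals0I)
  fix z assume z: "z \<in> hole \<beta> i n \<inter> hole \<beta> j m"
  obtain k where k: "k \<in> {0,1,2}" "k \<noteq> i" "k \<noteq> j" "{0,1,2} = {i, j, k}"
    using third_index[OF ij] .
  have "bary \<beta> j z < hole_rad \<beta> n" "bary \<beta> k z < hole_rad \<beta> n"
    using z mem_hole_iff[OF k(4) ij(3) k(2,3)[symmetric]] by auto
  moreover have "{0,1,2} = {j, i, k}" using k(4) by (simp add: insert_commute)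
  then have "bary \<beta> i z < hole_rad \<beta> m"
    using z mem_hole_iff[of j i k] ij(3) k(2,3) by auto
  moreover have "hole_rad \<beta> n \<le> hole_rad \<beta> 1"
    using \<open>1 \<le> n\<close> by (rule hole_rad_antimono)
  moreover have "hole_rad \<beta> m < 1"
    using hole_rad_le[of m] \<beta>_gt_1 by (simp add: order.strict_trans1)
  ultimately show False
    using bary_sum[OF ij(1,2) k(1) ij(3) k(2,3)[symmetric], of z] two_hole_rad_1_le by linarith
qed

lemma holes_meet_eq:
  assumes ij: "i \<in> {0,1,2}" "j \<in> {0,1,2}" and "hole \<beta> i n \<inter> hole \<beta> j m \<noteq> {}"
  shows "hole \<beta> i n = hole \<beta> j m"
proof (cases "i = j")
  case True
  then show ?thesis
    using hole_disjoint_same_index[OF ij(1), of n m] hole_disjoint_same_index[OF ij(1), of m n] assms(3)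
    by (cases n m rule: linorder_cases) (auto simp: Int_commute)
next
  case False
  have "\<not> 1 \<le> n"
    using hole_disjoint_distinct_index[OF ij False, of n m] assms(3) by blast
  moreover have "\<not> 1 \<le> m"
    using hole_disjoint_distinct_index[OF ij(2,1) False[symmetric], of m n] assms(3) by blast
  ultimately have "n = 0" "m = 0" by auto
  then show ?thesis using hole_0[OF ij(1)] hole_0[OF ij(2)] by simp
qed

lemma connected_component_hole_union:
  assumes "i \<in> {0,1,2}" "x \<in> hole \<beta> i n"
  shows "connected_component_set (hole_union \<beta>) x = hole \<beta> i n"
proof -
  define F where "F = {hole \<beta> j m | j m. j \<in> {0,1,2}}"
  have "hole_union \<beta> = \<Union>F"
    by (auto simp: F_def hole_union_def)
  moreover have "pairwise disjnt F"
    unfolding F_def pairwise_def disjnt_def using holes_meet_eq by blast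
  moreover have "connected_component_set (\<Union>F) x = hole \<beta> i n"
    by (rule connected_component_disjoint_open_Union)
      (use assms \<open>pairwise disjnt F\<close> in \<open>auto simp: F_def open_hole intro: convex_connected convex_hole\<close>)
  ultimately show ?thesis by simp
qed

section \<open>The attractor is the triangle minus the holes\<close>

lemma fq_inv_cross_holes:
  assumes ij: "i \<in> {0,1,2}" "j \<in> {0,1,2}" "i \<noteq> j" and "1 \<le> m" "1 \<le> m'"
    and in_j: "fq_inv \<beta> i z \<in> hole \<beta> j m" and in_i: "fq_inv \<beta> j z \<in> hole \<beta> i m'"
  shows False
proof -
  obtain k where k: "k \<in> {0,1,2}" "k \<noteq> i" "k \<noteq> j" "{0,1,2} = {i, j, k}"
    using third_index[OF ij] .
  define a where "a = \<beta> * bary \<beta> i z - 1"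
  define b where "b = \<beta> * bary \<beta> k z"
  define t where "t = \<beta> * bary \<beta> j z - 1"
  have "\<beta> * (bary \<beta> i z + bary \<beta> j z + bary \<beta> k z) = side_len \<beta> + 1"
    using bary_sum[OF ij(1,2) k(1) ij(3) k(2,3)[symmetric], of z] side_len_mult by simp
  then have sum: "a + b + t = side_len \<beta> - 1"
    unfolding a_def b_def t_def by (simp add: algebra_simps)
  have jik: "{0,1,2} = {j, i, k}" using k(4) by (simp add: insert_commute)
  have "bary \<beta> j (fq_inv \<beta> i z) < side_len \<beta> - side_len \<beta> * hole_rad \<beta> m"
      "bary \<beta> i (fq_inv \<beta> i z) < hole_rad \<beta> m" "bary \<beta> k (fq_inv \<beta> i z) < hole_rad \<beta> m"
    using in_j mem_hole_iff[OF jik ij(3)[symmetric] k(3)[symmetric] k(2)[symmetric]] by simp_all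
  then have j_hole: "t + 1 < side_len \<beta> - side_len \<beta> * hole_rad \<beta> m" "a < hole_rad \<beta> m" "b < hole_rad \<beta> m"
    using ij k(1-3) by (simp_all add: bary_fq_inv a_def b_def t_def)
  have "bary \<beta> i (fq_inv \<beta> j z) < side_len \<beta> - side_len \<beta> * hole_rad \<beta> m'"
      "bary \<beta> j (fq_inv \<beta> j z) < hole_rad \<beta> m'" "bary \<beta> k (fq_inv \<beta> j z) < hole_rad \<beta> m'"
    using in_i mem_hole_iff[OF k(4) ij(3) k(2)[symmetric] k(3)[symmetric]] by simp_all
  then have i_hole: "a + 1 < side_len \<beta> - side_len \<beta> * hole_rad \<beta> m'" "t < hole_rad \<beta> m'" "b < hole_rad \<beta> m'"
    using ij k(1-3) by (simp_all add: bary_fq_inv a_def b_def t_def)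
  have b_max: "b < hole_rad \<beta> (max m m')"
    using j_hole(3) i_hole(3) by (simp add: max_def)
  have distrib: "side_len \<beta> * (hole_rad \<beta> m + hole_rad \<beta> m') = side_len \<beta> * hole_rad \<beta> m + side_len \<beta> * hole_rad \<beta> m'"
    by (simp add: distrib_left)
  from hole_rad_dichotomy[OF \<open>1 \<le> m\<close> \<open>1 \<le> m'\<close>] show False
  proof
    assume "side_len \<beta> - 1 \<le> side_len \<beta> * (hole_rad \<beta> m + hole_rad \<beta> m') - hole_rad \<beta> (max m m')"
    then show False using sum j_hole i_hole b_max distrib by linarith
  next
    assume "hole_rad \<beta> m + hole_rad \<beta> m' + hole_rad \<beta> (max m m') \<le> side_len \<beta> - 1"
    then show False using sum j_hole i_hole b_max by linarith
  qed
qed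

lemma fq_inv_in_other_hole:
  assumes z: "z \<in> gasket \<beta>" and i: "i \<in> {0,1,2}" and large: "1 \<le> \<beta> * bary \<beta> i z"
    and out: "fq_inv \<beta> i z \<notin> gasket \<beta>"
  obtains j m where "j \<in> {0,1,2}" "j \<noteq> i" "1 \<le> m" "fq_inv \<beta> i z \<in> hole \<beta> j m"
    "1 \<le> \<beta> * bary \<beta> j z"
proof -
  have z_tri: "z \<in> tri \<beta>" and z_out: "z \<notin> hole_union \<beta>"
    using z by (auto simp: gasket_def)
  have "fq_inv \<beta> i z \<in> tri \<beta>"
    using fq_inv_in_tri_iff[OF z_tri i] large by simp
  then obtain j m where j: "j \<in> {0,1,2}" and in_hole: "fq_inv \<beta> i z \<in> hole \<beta> j m"
    using out by (auto simp: gasket_def hole_union_def)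
  have not_own: "fq_inv \<beta> i z \<notin> hole \<beta> i l" for l
  proof
    assume "fq_inv \<beta> i z \<in> hole \<beta> i l"
    then have "z \<in> fq \<beta> i ` hole \<beta> i l" by (simp add: mem_fq_image_iff)
    then have "z \<in> hole \<beta> i (Suc l)" by (simp add: hole_Suc[OF i])
    then show False using z_out i unfolding hole_union_def by blast
  qed
  then have "j \<noteq> i" using in_hole by blast
  moreover have "m \<noteq> 0"
  proof
    assume "m = 0"
    then have "fq_inv \<beta> i z \<in> hole \<beta> i 0" using in_hole hole_0[OF i] hole_0[OF j] by simp
    then show False using not_own by blast
  qed
  moreover have "1 \<le> \<beta> * bary \<beta> j z"
  proof -
    obtain k where k: "k \<in> {0,1,2}" "k \<noteq> j" "k \<noteq> i" "{0,1,2} = {j, i, k}"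
      using third_index[OF j i \<open>j \<noteq> i\<close>] .
    have "bary \<beta> i (fq_inv \<beta> i z) < hole_rad \<beta> m" "bary \<beta> k (fq_inv \<beta> i z) < hole_rad \<beta> m"
      using in_hole mem_hole_iff[OF k(4) \<open>j \<noteq> i\<close> k(2,3)[symmetric]] by simp_all
    then have "\<beta> * bary \<beta> i z - 1 < hole_rad \<beta> m" "\<beta> * bary \<beta> k z < hole_rad \<beta> m"
      using i k(1-3) by (simp_all add: bary_fq_inv)
    moreover have "\<beta> * (bary \<beta> j z + bary \<beta> i z + bary \<beta> k z) = side_len \<beta> + 1"
      using bary_sum[OF j i k(1) \<open>j \<noteq> i\<close> k(2,3)[symmetric], of z] side_len_mult by simp
    moreover have "2 * hole_rad \<beta> m \<le> side_len \<beta> - 1"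
      using two_hole_rad_1_le hole_rad_antimono[of 1 m] \<open>m \<noteq> 0\<close> by simp
    ultimately show ?thesis by (simp add: distrib_left)
  qed
  ultimately show ?thesis using that[OF j] in_hole by (simp add: Suc_le_eq)
qed

lemma fq_gasket_subset:
  assumes i: "i \<in> {0,1,2}"
  shows "fq \<beta> i ` gasket \<beta> \<subseteq> gasket \<beta>"
proof
  fix z assume "z \<in> fq \<beta> i ` gasket \<beta>"
  then obtain w where w: "w \<in> gasket \<beta>" and z: "z = fq \<beta> i w" by blast
  have w_tri: "w \<in> tri \<beta>" and w_out: "w \<notin> hole_union \<beta>"
    using w by (auto simp: gasket_def)
  have w_nonneg: "0 \<le> bary \<beta> j w" if "j \<in> {0,1,2}" for j
    using w_tri that unfolding tri_def by blast
  have "0 \<le> bary \<beta> j z" if j: "j \<in> {0,1,2}" for j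
    unfolding z bary_fq[OF i j] using w_nonneg[OF j] \<beta>_gt_1 by simp
  then have "z \<in> tri \<beta>" by (simp add: tri_def)
  have large: "1 \<le> \<beta> * bary \<beta> i z"
    unfolding z bary_fq[OF i i] using w_nonneg[OF i] \<beta>_gt_1 by simp
  have "z \<notin> hole \<beta> j n" if j: "j \<in> {0,1,2}" for j n
  proof
    assume in_hole: "z \<in> hole \<beta> j n"
    show False
    proof (cases "j = i \<and> n \<noteq> 0")
      case True
      then obtain l where "j = i" "n = Suc l" by (metis not0_implies_Suc)
      then have "z \<in> fq \<beta> i ` hole \<beta> i l" using in_hole hole_Suc[OF i, of l] by simp
      then have "w \<in> hole \<beta> i l" by (simp add: mem_fq_image_iff z fq_inv_fq)
      then show False using w_out i by (auto simp: hole_union_def)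
    next
      case False
      then have "\<beta> * bary \<beta> i z < 1" using bary_lt_in_hole[OF i j in_hole] by blast
      then show False using large by simp
    qed
  qed
  with \<open>z \<in> tri \<beta>\<close> show "z \<in> gasket \<beta>" by (auto simp: gasket_def hole_union_def)
qed

lemma gasket_subset_fq_image:
  assumes z: "z \<in> gasket \<beta>"
  shows "\<exists>i\<in>{0,1,2}. fq_inv \<beta> i z \<in> gasket \<beta>"
proof (rule ccontr)
  assume none: "\<not> ?thesis"
  have "z \<notin> hole \<beta> 0 0" using z by (auto simp: gasket_def hole_union_def)
  then obtain i where i: "i \<in> {0,1,2}" and large: "1 \<le> \<beta> * bary \<beta> i z"
    using hole_0[of 0] by (auto simp: not_less)
  have "fq_inv \<beta> i z \<notin> gasket \<beta>" using none i by blast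
  then obtain j m where j: "j \<in> {0,1,2}" "j \<noteq> i" "1 \<le> m" "fq_inv \<beta> i z \<in> hole \<beta> j m"
      and large_j: "1 \<le> \<beta> * bary \<beta> j z"
    by (rule fq_inv_in_other_hole[OF z i large])
  have "fq_inv \<beta> j z \<notin> gasket \<beta>" using none j(1) by blast
  then obtain j' m' where j': "j' \<in> {0,1,2}" "j' \<noteq> j" "1 \<le> m'" "fq_inv \<beta> j z \<in> hole \<beta> j' m'"
      "1 \<le> \<beta> * bary \<beta> j' z"
    by (rule fq_inv_in_other_hole[OF z j(1) large_j])
  show False
  proof (cases "j' = i")
    case True
    then show False using fq_inv_cross_holes[OF i j(1) j(2)[symmetric] j(3) j'(3) j(4)] j'(4) by simp
  next
    case False
    then have "\<beta> * (\<beta> * bary \<beta> i z) < 1"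
      using bary_lt_in_hole[OF i j'(1,4)] bary_fq_inv[OF j(1) i] j(2) by simp
    moreover have "1 * 1 \<le> \<beta> * (\<beta> * bary \<beta> i z)"
      using large \<beta>_gt_1 by (intro mult_mono) auto
    ultimately show False by simp
  qed
qed

lemma gasket_self_similar: "gasket \<beta> = (\<Union>i\<in>{0,1,2}. fq \<beta> i ` gasket \<beta>)"
proof
  show "gasket \<beta> \<subseteq> (\<Union>i\<in>{0,1,2}. fq \<beta> i ` gasket \<beta>)"
  proof
    fix z assume "z \<in> gasket \<beta>"
    then obtain i where i: "i \<in> {0,1,2}" and "fq_inv \<beta> i z \<in> gasket \<beta>"
      using gasket_subset_fq_image by blast
    then have "z \<in> fq \<beta> i ` gasket \<beta>" by (simp add: mem_fq_image_iff)
    with i show "z \<in> (\<Union>i\<in>{0,1,2}. fq \<beta> i ` gasket \<beta>)" by blast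
  qed
  show "(\<Union>i\<in>{0,1,2}. fq \<beta> i ` gasket \<beta>) \<subseteq> gasket \<beta>"
    using fq_gasket_subset by blast
qed

lemma compact_gasket: "compact (gasket \<beta>)"
proof -
  have "open (hole_union \<beta>)" unfolding hole_union_def by (intro open_UN ballI open_hole)
  then have "closed (gasket \<beta>)" by (simp add: gasket_def closed_tri closed_Diff)
  moreover have "bounded (gasket \<beta>)"
    using bounded_tri bounded_subset by (auto simp: gasket_def)
  ultimately show ?thesis by (simp add: compact_eq_bounded_closed)
qed

lemma S_beta_eq_gasket: "S_beta \<beta> = gasket \<beta>"
  using S_beta_eqI[OF \<beta>_gt_1] vertex_in_gasket compact_gasket gasket_self_similar by blast

lemma Delta_eq_tri: "Delta \<beta> = tri \<beta>"
  by (simp add: Delta_def S_beta_eq_gasket convex_hull_gasket)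

lemma Hc_eq_hole: "Hc \<beta> = hole \<beta> 0 0"
proof (rule set_eqI)
  fix z
  have "z \<in> Hc \<beta> \<longleftrightarrow> z \<in> tri \<beta> \<and> (\<forall>i\<in>{0,1,2}. fq_inv \<beta> i z \<notin> tri \<beta>)"
    by (simp add: Hc_def Delta_eq_tri mem_fq_image_iff)
  also have "\<dots> \<longleftrightarrow> z \<in> tri \<beta> \<and> (\<forall>i\<in>{0,1,2}. \<beta> * bary \<beta> i z < 1)"
  proof (cases "z \<in> tri \<beta>")
    case True
    then show ?thesis using fq_inv_in_tri_iff[OF True] by (simp add: not_le)
  qed simp
  also have "\<dots> \<longleftrightarrow> z \<in> hole \<beta> 0 0"
    using hole_subset_tri[of 0 0] hole_0[of 0] by auto
  finally show "z \<in> Hc \<beta> \<longleftrightarrow> z \<in> hole \<beta> 0 0" .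
qed

lemma interior_gasket_nonempty: "interior (gasket \<beta>) \<noteq> {}"
proof -
  define U where "U = {z. 1 < \<beta> * bary \<beta> 0 z \<and> 1 < \<beta> * bary \<beta> 1 z \<and> 0 < bary \<beta> 2 z}"
  have "open U" unfolding U_def
    by (intro open_Collect_conj open_Collect_less continuous_on_bary continuous_intros)
  moreover have "U \<subseteq> gasket \<beta>"
  proof
    fix z assume "z \<in> U"
    then have z_bary: "1 < \<beta> * bary \<beta> 0 z" "1 < \<beta> * bary \<beta> 1 z" "0 < bary \<beta> 2 z"
      by (simp_all add: U_def)
    have pos: "0 < b" if "1 < \<beta> * b" for b
      using zero_less_mult_pos[of \<beta> b] that \<beta>_gt_1 by linarith
    have "z \<in> tri \<beta>"
      using z_bary pos[OF z_bary(1)] pos[OF z_bary(2)] unfolding tri_def by simp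
    moreover have "z \<notin> hole \<beta> j n" if j: "j \<in> {0,1,2}" for j n
    proof
      assume in_hole: "z \<in> hole \<beta> j n"
      have "\<beta> * bary \<beta> 0 z < 1 \<or> \<beta> * bary \<beta> 1 z < 1"
        using bary_lt_in_hole[OF _ j in_hole, of 0] bary_lt_in_hole[OF _ j in_hole, of 1] by auto
      then show False using z_bary by linarith
    qed
    ultimately show "z \<in> gasket \<beta>" by (auto simp: gasket_def hole_union_def)
  qed
  moreover have "U \<noteq> {}"
  proof -
    define e where "e = (side_len \<beta> - 2 * hole_rad \<beta> 0) / 4"
    have "e > 0" using two_hole_rad_0_lt by (simp add: e_def)
    then have "(hole_rad \<beta> 0 + e, e) \<in> U"
      using \<beta>_gt_1 by (simp add: U_def bary_def e_def hole_rad_0 field_simps)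
    then show ?thesis by blast
  qed
  ultimately show ?thesis
    using interior_maximal by blast
qed

lemma is_hole_iterate:
  assumes "is_hole \<beta> C"
  shows "\<exists>i\<in>{0,1,2}. \<exists>n. C = (fq \<beta> i ^^ n) ` Hc \<beta>"
proof -
  have "hole_union \<beta> \<subseteq> tri \<beta>"
    unfolding hole_union_def using hole_subset_tri by blast
  then have holes: "Delta \<beta> - S_beta \<beta> = hole_union \<beta>"
    by (auto simp: Delta_eq_tri S_beta_eq_gasket gasket_def)
  obtain x where "x \<in> Delta \<beta> - S_beta \<beta>" and "C = connected_component_set (Delta \<beta> - S_beta \<beta>) x"
    using assms unfolding is_hole_def by blast
  then have "x \<in> hole_union \<beta>" and C: "C = connected_component_set (hole_union \<beta>) x"
    by (simp_all only: holes)
  then obtain i n where i: "i \<in> {0,1,2}" and x: "x \<in> hole \<beta> i n"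
    unfolding hole_union_def by blast
  have "hole \<beta> i 0 = Hc \<beta>"
    using hole_0[OF i] hole_0[of 0] by (simp add: Hc_eq_hole)
  then have "C = (fq \<beta> i ^^ n) ` Hc \<beta>"
    using C connected_component_hole_union[OF i x] hole_iterate[OF i] by simp
  then show ?thesis using i by blast
qed

end

end

theorem proposition6p2:
  fixes \<beta> \<beta>s :: real
  assumes "\<beta>s ^ 3 - 2 * \<beta>s ^ 2 + 2 * \<beta>s = 2"
    and "3 / 2 < \<beta>" and "\<beta> \<le> \<beta>s"
  shows "interior (S_beta \<beta>) \<noteq> {} \<and>
    (\<forall>C. is_hole \<beta> C \<longrightarrow> (\<exists>i\<in>{0,1,2}. \<exists>n::nat. C = (fq \<beta> i ^^ n) ` Hc \<beta>))"
proof -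
  have \<beta>_gt_1: "1 < \<beta>" using assms(2) by simp
  have cubic: "\<beta> ^ 3 - 2 * \<beta> ^ 2 + 2 * \<beta> \<le> 2"
    using cubic_mono[OF assms(3)] assms(1) by simp
  note facts = \<beta>_gt_1 assms(2) cubic
  have "interior (S_beta \<beta>) \<noteq> {}"
    unfolding S_beta_eq_gasket[OF facts] by (rule interior_gasket_nonempty[OF facts])
  moreover have "\<forall>C. is_hole \<beta> C \<longrightarrow> (\<exists>i\<in>{0,1,2}. \<exists>n::nat. C = (fq \<beta> i ^^ n) ` Hc \<beta>)"
    using is_hole_iterate[OF facts] by blast
  ultimately show ?thesis ..
qed

end
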